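(* Let $t$ be an odd prime and let $n$ be a nonnegative integer with $n\not\equiv 0\pmod t$. Then for every $0\leq i\leq t-1$, \[ M_t(i,t,n)=\frac{p_t(n)}{t},\qquad \overline{M}_t(i,t,n)=\frac{\overline{p}_t(n)}{t}\equiv 0\pmod 2,\qquad \hat{M}_t(i,t,n)=\frac{\hat{p}_t(n)}{t}. \] In particular, $p_t(n)\equiv \hat{p}_t(n)\equiv 0\pmod t$ and $\overline{p}_t(n)\equiv 0\pmod{2t}$.
   Context: An overpartition is a partition in which the first occurrence of each distinct part size may be overlined; a pod is a partition in which the odd parts are distinct. For a partition $\pi$ of any of these three kinds, $\ell(\pi)$ is its total number of parts (overlined and non-overlined, resp. odd and even). A $t$-colored partition (resp. overpartition, pod) of $n$ is a $t$-tuple $\overrightarrow{\pi}=(\pi_1,\dots,\pi_t)$ of ordinary partitions (resp. overpartitions, pods) whose parts sum in total to $n$; $p_t(n)$, $\overline{p}_t(n)$, $\hat{p}_t(n)$ denote the respective numbers. Define \[ r^{*}(\overrightarrow{\pi})=\sum_{k=1}^{(t-1)/2} k\bigl(\ell(\pi_k)-\ell(\pi_{t-k})\bigr). \] $M_t(i,t,n)$ (resp. $\overline{M}_t(i,t,n)$, $\hat{M}_t(i,t,n)$) denotes the number of $t$-colored partitions (resp. overpartitions, pods) of $n$ with $r^{*}$ congruent to $i$ modulo $t$. *)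

theory Defs
  imports Main "HOL-Library.Multiset" "HOL-Computational_Algebra.Primes"
begin

definition is_partition :: "nat multiset \<Rightarrow> bool" where
  "is_partition m \<longleftrightarrow> 0 \<notin># m"

text \<open>Overpartition: (non-overlined parts, overlined parts). Since only the first
  occurrence of a part size may be overlined, overlined parts are distinct,
  hence form a finite set of positive integers.\<close>
type_synonym overpartition = "nat multiset \<times> nat set"

definition is_overpartition :: "overpartition \<Rightarrow> bool" where
  "is_overpartition p \<longleftrightarrow> 0 \<notin># fst p \<and> finite (snd p) \<and> 0 \<notin> snd p"

definition op_weight :: "overpartition \<Rightarrow> nat" where
  "op_weight p = sum_mset (fst p) + \<Sum>(snd p)"

definition op_len :: "overpartition \<Rightarrow> nat" where
  "op_len p = size (fst p) + card (snd p)"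

definition is_pod :: "nat multiset \<Rightarrow> bool" where
  "is_pod m \<longleftrightarrow> 0 \<notin># m \<and> (\<forall>x. odd x \<longrightarrow> count m x \<le> 1)"

text \<open>A t-colored object is a list of length t; colour k (1 \<le> k \<le> t) is entry k-1.\<close>
definition colored :: "('a \<Rightarrow> bool) \<Rightarrow> ('a \<Rightarrow> nat) \<Rightarrow> nat \<Rightarrow> nat \<Rightarrow> 'a list set" where
  "colored P w t n = {xs. length xs = t \<and> (\<forall>x\<in>set xs. P x) \<and> sum_list (map w xs) = n}"

definition rstar :: "('a \<Rightarrow> nat) \<Rightarrow> nat \<Rightarrow> 'a list \<Rightarrow> int" where
  "rstar L t xs = (\<Sum>k=1..(t-1) div 2. int k * (int (L (xs ! (k-1))) - int (L (xs ! (t-k-1)))))"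

definition Mgen :: "('a \<Rightarrow> bool) \<Rightarrow> ('a \<Rightarrow> nat) \<Rightarrow> ('a \<Rightarrow> nat) \<Rightarrow> nat \<Rightarrow> nat \<Rightarrow> nat \<Rightarrow> nat" where
  "Mgen P w L i t n = card {xs \<in> colored P w t n. rstar L t xs mod int t = int i mod int t}"

definition p_col :: "nat \<Rightarrow> nat \<Rightarrow> nat" where
  "p_col t n = card (colored is_partition sum_mset t n)"
definition pbar_col :: "nat \<Rightarrow> nat \<Rightarrow> nat" where
  "pbar_col t n = card (colored is_overpartition op_weight t n)"
definition phat_col :: "nat \<Rightarrow> nat \<Rightarrow> nat" where
  "phat_col t n = card (colored is_pod sum_mset t n)"

definition M_col :: "nat \<Rightarrow> nat \<Rightarrow> nat \<Rightarrow> nat" where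
  "M_col i t n = Mgen is_partition sum_mset size i t n"
definition Mbar_col :: "nat \<Rightarrow> nat \<Rightarrow> nat \<Rightarrow> nat" where
  "Mbar_col i t n = Mgen is_overpartition op_weight op_len i t n"
definition Mhat_col :: "nat \<Rightarrow> nat \<Rightarrow> nat \<Rightarrow> nat" where
  "Mhat_col i t n = Mgen is_pod sum_mset size i t n"

end

theory Submission
  imports Defs "HOL-Number_Theory.Cong" "HOL-Library.Disjoint_Sets" "HOL-Library.Z2"
begin

text \<open>Modulo \<open>t\<close>, \<open>r*\<close> equals the weighted length \<open>\<Sum>\<^sub>j j \<cdot> \<ell>(\<pi>\<^sub>j)\<close>. Let \<open>N\<^sub>m\<close> be the
  total number of parts of size \<open>m\<close> over all colours; since \<open>n = \<Sum>\<^sub>m m N\<^sub>m\<close> and \<open>t \<nmid> n\<close>,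
  some \<open>N\<^sub>m\<close> is prime to \<open>t\<close>, and we take the least such \<open>m\<close>. Giving colour \<open>j\<close> the parts
  of size \<open>m\<close> of colour \<open>j + s\<close> (indices mod \<open>t\<close>) preserves \<open>n\<close> and all \<open>N\<^sub>k\<close>, and adds
  \<open>(t - s) N\<^sub>m\<close> to the weighted length mod \<open>t\<close>. For \<open>t - s \<equiv> N\<^sub>m\<^sup>-\<^sup>1\<close> this injects
  each residue class of \<open>r*\<close> into the next one, so all \<open>t\<close> classes have the same size.
  For overpartitions, toggling the overline of the smallest part in the first nonempty
  colour is a fixpoint-free involution preserving weight and \<open>r*\<close>, so each class is even.\<close>

lemma bij_betw_add_mod:
  assumes "0 < (t::nat)"
  shows "bij_betw (\<lambda>j. (j + s) mod t) {..<t} {..<t}"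
proof -
  have inj: "inj_on (\<lambda>j. (j + s) mod t) {..<t}"
  proof (rule inj_onI)
    fix a b assume "a \<in> {..<t}" "b \<in> {..<t}" "(a + s) mod t = (b + s) mod t"
    then show "a = b" by (simp add: cong_def[symmetric] cong_add_rcancel_nat) (simp add: cong_def)
  qed
  moreover have "(\<lambda>j. (j + s) mod t) ` {..<t} \<subseteq> {..<t}" using assms by auto
  ultimately show ?thesis by (simp add: bij_betw_def endo_inj_surj)
qed

lemma sum_add_mod_reindex:
  assumes "0 < (t::nat)"
  shows "(\<Sum>j<t. f ((j + s) mod t)) = (\<Sum>j<t. f j)"
  using sum.reindex_bij_betw[OF bij_betw_add_mod[OF assms], of f] by simp

lemma sum_weighted_add_mod_cong:
  fixes c :: "nat \<Rightarrow> int"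
  assumes "0 < t" "s \<le> t"
  shows "[(\<Sum>j<t. int (j + 1) * c ((j + s) mod t))
          = (\<Sum>j<t. int (j + 1) * c j) + int (t - s) * (\<Sum>j<t. c j)] (mod int t)"
proof -
  have weight: "[int (j + 1) = int ((j + s) mod t) + int (t - s) + 1] (mod int t)" for j
  proof -
    have "[(j + s) mod t + (t - s) + 1 = (j + s) + (t - s) + 1] (mod t)"
      by (intro cong_add cong_refl) (simp add: cong_def)
    also have "(j + s) + (t - s) + 1 = (j + 1) + t" using assms(2) by simp
    also have "[(j + 1) + t = j + 1] (mod t)" by (simp add: cong_def del: add_Suc_right add_Suc)
    finally have "[j + 1 = (j + s) mod t + (t - s) + 1] (mod t)" by (rule cong_sym)
    then show ?thesis by (simp add: cong_int_iff[symmetric] add_ac)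
  qed
  have "[(\<Sum>j<t. int (j + 1) * c ((j + s) mod t))
         = (\<Sum>j<t. (int ((j + s) mod t) + int (t - s) + 1) * c ((j + s) mod t))] (mod int t)"
    by (intro cong_sum cong_mult weight cong_refl)
  also have "(\<Sum>j<t. (int ((j + s) mod t) + int (t - s) + 1) * c ((j + s) mod t))
             = (\<Sum>j<t. (int j + int (t - s) + 1) * c j)"
    by (rule sum_add_mod_reindex[OF assms(1)])
  also have "\<dots> = (\<Sum>j<t. int (j + 1) * c j) + int (t - s) * (\<Sum>j<t. c j)"
    by (simp add: algebra_simps sum.distrib sum_distrib_right)
  finally show ?thesis .
qed

lemma cyclic_mono_imp_eq:
  fixes f :: "nat \<Rightarrow> nat"
  assumes "0 < t" and le: "\<And>i. i < t \<Longrightarrow> f i \<le> f (Suc i mod t)" and "i < t"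
  shows "f i = f 0"
proof -
  have up: "f 0 \<le> f i" if "i < t" for i
    using that
  proof (induction i)
    case (Suc i)
    then show ?case using le[of i] by simp
  qed simp
  have down: "f (t - 1 - d) \<le> f 0" if "d < t" for d
    using that
  proof (induction d)
    case 0
    show ?case using le[of "t - 1"] assms(1) by simp
  next
    case (Suc d)
    then have "Suc (t - 1 - Suc d) mod t = t - 1 - d" by simp
    then show ?case using le[of "t - 1 - Suc d"] Suc by simp
  qed
  show ?thesis using up[OF assms(3)] down[of "t - 1 - i"] assms by simp
qed

lemma prime_inverse_mod_exists:
  fixes t K :: nat
  assumes "prime t" "\<not> t dvd K"
  shows "\<exists>u. 0 < u \<and> u < t \<and> [u * K = 1] (mod t)"
proof -
  have "coprime K t" using prime_imp_coprime[OF assms] by (simp add: coprime_commute)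
  then obtain x where "[K * x = 1] (mod t)" using cong_solve_coprime_nat by auto
  moreover have "[(x mod t) * K = K * x] (mod t)" by (simp add: cong_def mod_mult_right_eq mult.commute)
  ultimately have inv: "[(x mod t) * K = 1] (mod t)" using cong_trans by blast
  moreover have "\<not> [0 = 1] (mod t)"
    using prime_gt_1_nat[OF assms(1)] by (simp add: cong_def)
  ultimately have "x mod t \<noteq> 0" by (metis mult_zero_left)
  then show ?thesis using inv prime_gt_0_nat[OF assms(1)] by (intro exI[of _ "x mod t"]) auto
qed

lemma even_card_involution:
  assumes "\<And>x. x \<in> A \<Longrightarrow> g x \<in> A" "\<And>x. x \<in> A \<Longrightarrow> g (g x) = x" "\<And>x. x \<in> A \<Longrightarrow> g x \<noteq> x"
  shows "even (card A)"
proof -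
  have "(\<Sum>x\<in>A. 1 :: bit) = 0"
    by (rule sum_involution_eq_0[where h = g]) (use assms in auto)
  then have "of_nat (card A) = (0 :: bit)" by simp
  then show ?thesis by (metis even_of_nat even_zero)
qed

definition weighted_length :: "('a \<Rightarrow> nat) \<Rightarrow> nat \<Rightarrow> 'a list \<Rightarrow> int" where
  "weighted_length L t xs = (\<Sum>j<t. int (j + 1) * int (L (xs ! j)))"

text \<open>As \<open>-k \<equiv> t - k\<close>, \<open>r*\<close> weights colour \<open>j < t\<close> by \<open>j\<close>; the colour \<open>t\<close> it omits has
  weight \<open>t \<equiv> 0\<close>.\<close>
lemma rstar_mod_eq_weighted_length_mod:
  assumes "odd t"
  shows "rstar L t xs mod int t = weighted_length L t xs mod int t"
proof -
  define h where "h = (t - 1) div 2"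
  have t: "t = 2 * h + 1" using assms unfolding h_def by presburger
  define a where "a j = int (L (xs ! j))" for j
  have low: "(\<Sum>k=1..h. int k * a (k - 1)) = (\<Sum>j<h. int (j + 1) * a j)"
    by (rule sum.reindex_bij_witness[where i="\<lambda>j. j + 1" and j="\<lambda>k. k - 1"]) auto
  have high: "(\<Sum>k=1..h. int (t - k) * a (t - k - 1)) = (\<Sum>j\<in>{h..<2*h}. int (j + 1) * a j)"
    by (rule sum.reindex_bij_witness[where i="\<lambda>j. 2 * h - j" and j="\<lambda>k. 2 * h - k"]) (auto simp: t)
  have "weighted_length L t xs = (\<Sum>j<2*h. int (j + 1) * a j) + int t * a (2 * h)"
    unfolding weighted_length_def a_def t by (simp add: algebra_simps)
  also have "(\<Sum>j<2*h. int (j + 1) * a j) = (\<Sum>j<h. int (j + 1) * a j) + (\<Sum>j\<in>{h..<2*h}. int (j + 1) * a j)"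
    using sum.atLeastLessThan_concat[of 0 h "2 * h" "\<lambda>j. int (j + 1) * a j"]
    by (simp add: atLeast0LessThan)
  finally have split: "weighted_length L t xs
      = (\<Sum>j<h. int (j + 1) * a j) + (\<Sum>j\<in>{h..<2*h}. int (j + 1) * a j) + int t * a (2 * h)" .
  have "(\<Sum>k=1..h. int (t - k) * a (t - k - 1)) = (\<Sum>k=1..h. int t * a (t - k - 1) - int k * a (t - k - 1))"
    by (rule sum.cong) (auto simp: t of_nat_diff algebra_simps)
  then have mirror: "(\<Sum>k=1..h. int (t - k) * a (t - k - 1))
      = int t * (\<Sum>k=1..h. a (t - k - 1)) - (\<Sum>k=1..h. int k * a (t - k - 1))"
    by (simp add: sum_subtractf sum_distrib_left)
  have "rstar L t xs = (\<Sum>k=1..h. int k * a (k - 1)) - (\<Sum>k=1..h. int k * a (t - k - 1))"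
    unfolding rstar_def a_def h_def[symmetric] by (simp add: sum_subtractf algebra_simps)
  then have "weighted_length L t xs = rstar L t xs + int t * ((\<Sum>k=1..h. a (t - k - 1)) + a (2 * h))"
    using low high split mirror by (simp add: algebra_simps)
  then show ?thesis by simp
qed

lemma colored_iff_nth:
  "xs \<in> colored P w t n \<longleftrightarrow> length xs = t \<and> (\<forall>j<t. P (xs ! j)) \<and> (\<Sum>j<t. w (xs ! j)) = n"
proof -
  have "length xs = t \<Longrightarrow> sum_list (map w xs) = (\<Sum>j<t. w (xs ! j))"
    by (simp add: sum_list_sum_nth atLeast0LessThan)
  then show ?thesis unfolding colored_def by (auto simp: all_set_conv_all_nth)
qed

lemma rstar_eq_if_map_length_eq:
  assumes "map L ys = map L xs" "length xs = t"
  shows "rstar L t ys = rstar L t xs"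
proof -
  have "L (ys ! j) = L (xs ! j)" if "j < t" for j
    using assms that by (metis length_map nth_map)
  then show ?thesis unfolding rstar_def by (intro sum.cong refl) auto
qed

section \<open>Moving parts of one size between colours\<close>

text \<open>An abstract kind of partition: \<open>nparts m x\<close> counts the parts of size \<open>m\<close> of \<open>x\<close>, and
  \<open>replace_parts m x y\<close> is \<open>x\<close> with its parts of size \<open>m\<close> replaced by those of \<open>y\<close>.\<close>
locale partition_kind =
  fixes P :: "'a \<Rightarrow> bool" and w :: "'a \<Rightarrow> nat" and L :: "'a \<Rightarrow> nat"
    and nparts :: "nat \<Rightarrow> 'a \<Rightarrow> nat" and replace_parts :: "nat \<Rightarrow> 'a \<Rightarrow> 'a \<Rightarrow> 'a"
  assumes replace_parts_closed: "P x \<Longrightarrow> P y \<Longrightarrow> P (replace_parts m x y)"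
    and weight_replace_parts:
      "P x \<Longrightarrow> P y \<Longrightarrow> w (replace_parts m x y) + m * nparts m x = w x + m * nparts m y"
    and length_replace_parts:
      "P x \<Longrightarrow> P y \<Longrightarrow> L (replace_parts m x y) + nparts m x = L x + nparts m y"
    and nparts_replace_parts:
      "nparts k (replace_parts m x y) = (if k = m then nparts m y else nparts k x)"
    and replace_parts_replace_parts:
      "replace_parts m (replace_parts m a b) (replace_parts m c d) = replace_parts m a d"
    and replace_parts_self: "replace_parts m a a = a"
    and weight_eq_sum_nparts: "P x \<Longrightarrow> w x \<le> B \<Longrightarrow> w x = (\<Sum>k\<le>B. k * nparts k x)"
    and finite_weight_le: "finite {x. P x \<and> w x \<le> B}"
begin

definition shift_parts :: "nat \<Rightarrow> nat \<Rightarrow> nat \<Rightarrow> 'a list \<Rightarrow> 'a list" where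
  "shift_parts t m s xs = map (\<lambda>j. replace_parts m (xs ! j) (xs ! ((j + s) mod t))) [0..<t]"

definition total_nparts :: "nat \<Rightarrow> nat \<Rightarrow> 'a list \<Rightarrow> nat" where
  "total_nparts t k xs = (\<Sum>j<t. nparts k (xs ! j))"

lemma length_shift_parts [simp]: "length (shift_parts t m s xs) = t"
  by (simp add: shift_parts_def)

lemma nth_shift_parts [simp]:
  "j < t \<Longrightarrow> shift_parts t m s xs ! j = replace_parts m (xs ! j) (xs ! ((j + s) mod t))"
  by (simp add: shift_parts_def)

lemma finite_colored: "finite (colored P w t n)"
proof (rule finite_subset)
  show "colored P w t n \<subseteq> {xs. set xs \<subseteq> {x. P x \<and> w x \<le> n} \<and> length xs = t}"
    by (auto simp: colored_def member_le_sum_list)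
  show "finite {xs. set xs \<subseteq> {x. P x \<and> w x \<le> n} \<and> length xs = t}"
    by (rule finite_lists_length_eq[OF finite_weight_le])
qed

lemma shift_parts_colored:
  assumes "0 < t" "xs \<in> colored P w t n"
  shows "shift_parts t m s xs \<in> colored P w t n"
proof -
  have P: "\<And>j. j < t \<Longrightarrow> P (xs ! j)" and W: "(\<Sum>j<t. w (xs ! j)) = n"
    using assms(2) by (auto simp: colored_iff_nth)
  have "(\<Sum>j<t. w (shift_parts t m s xs ! j) + m * nparts m (xs ! j))
      = (\<Sum>j<t. w (xs ! j) + m * nparts m (xs ! ((j + s) mod t)))"
    by (rule sum.cong) (auto simp: weight_replace_parts P assms(1))
  then have "(\<Sum>j<t. w (shift_parts t m s xs ! j)) + m * (\<Sum>j<t. nparts m (xs ! j))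
      = n + m * (\<Sum>j<t. nparts m (xs ! ((j + s) mod t)))"
    by (simp add: sum.distrib sum_distrib_left W)
  then have "(\<Sum>j<t. w (shift_parts t m s xs ! j)) = n"
    using sum_add_mod_reindex[OF assms(1), of "\<lambda>j. nparts m (xs ! j)" s] by simp
  then show ?thesis using P replace_parts_closed assms(1) by (simp add: colored_iff_nth)
qed

lemma total_nparts_shift_parts:
  assumes "0 < t"
  shows "total_nparts t k (shift_parts t m s xs) = total_nparts t k xs"
  using sum_add_mod_reindex[OF assms, of "\<lambda>j. nparts m (xs ! j)" s]
  by (cases "k = m") (simp_all add: total_nparts_def nparts_replace_parts)

lemma shift_parts_shift_parts:
  assumes "length xs = t" "a + b = t"
  shows "shift_parts t m a (shift_parts t m b xs) = xs"
proof (rule nth_equalityI)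
  fix j assume "j < length (shift_parts t m a (shift_parts t m b xs))"
  then have j: "j < t" by simp
  have "((j + a) mod t + b) mod t = j"
    using j assms(2) by (metis add.assoc mod_add_left_eq mod_less mod_self add.commute mod_add_self2)
  then show "shift_parts t m a (shift_parts t m b xs) ! j = xs ! j"
    using j by (simp add: replace_parts_replace_parts replace_parts_self)
qed (use assms in simp)

text \<open>Parts of size \<open>m\<close> move from colour \<open>j + s\<close> to colour \<open>j\<close>, i.e. \<open>t - s\<close> colours up
  modulo \<open>t\<close>.\<close>
lemma weighted_length_shift_parts_cong:
  assumes "0 < t" "xs \<in> colored P w t n" "s \<le> t"
  shows "[weighted_length L t (shift_parts t m s xs)
          = weighted_length L t xs + int (t - s) * int (total_nparts t m xs)] (mod int t)"
proof -
  have P: "\<And>j. j < t \<Longrightarrow> P (xs ! j)" using assms(2) by (auto simp: colored_iff_nth)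
  define c where "c j = int (nparts m (xs ! j))" for j
  have length_shifted:
    "int (L (shift_parts t m s xs ! j)) = int (L (xs ! j)) + c ((j + s) mod t) - c j" if "j < t" for j
    using length_replace_parts[OF P P, of j "(j + s) mod t" m] that assms(1) by (simp add: c_def)
  have "weighted_length L t (shift_parts t m s xs)
      = (\<Sum>j<t. int (j + 1) * int (L (xs ! j)) + int (j + 1) * c ((j + s) mod t) - int (j + 1) * c j)"
    unfolding weighted_length_def
    by (intro sum.cong) (simp_all add: length_shifted algebra_simps del: nth_shift_parts)
  also have "\<dots> = weighted_length L t xs + (\<Sum>j<t. int (j + 1) * c ((j + s) mod t)) - (\<Sum>j<t. int (j + 1) * c j)"
    by (simp add: weighted_length_def sum.distrib sum_subtractf)
  also have "[\<dots> = weighted_length L t xs + ((\<Sum>j<t. int (j + 1) * c j) + int (t - s) * (\<Sum>j<t. c j))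
                    - (\<Sum>j<t. int (j + 1) * c j)] (mod int t)"
    by (intro cong_add cong_diff cong_refl sum_weighted_add_mod_cong assms(1,3))
  also have "(\<Sum>j<t. c j) = int (total_nparts t m xs)"
    by (simp add: total_nparts_def c_def)
  finally show ?thesis by simp
qed

definition pivot :: "nat \<Rightarrow> 'a list \<Rightarrow> nat" where
  "pivot t xs = (LEAST k. \<not> t dvd total_nparts t k xs)"

definition pivot_inverse :: "nat \<Rightarrow> 'a list \<Rightarrow> nat" where
  "pivot_inverse t xs = (SOME u. 0 < u \<and> u < t \<and> [u * total_nparts t (pivot t xs) xs = 1] (mod t))"

definition advance :: "nat \<Rightarrow> 'a list \<Rightarrow> 'a list" where
  "advance t xs = shift_parts t (pivot t xs) (t - pivot_inverse t xs) xs"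

definition residue_class :: "nat \<Rightarrow> nat \<Rightarrow> nat \<Rightarrow> 'a list set" where
  "residue_class t n i = {xs \<in> colored P w t n. weighted_length L t xs mod int t = int i}"

lemma ex_total_nparts_not_dvd:
  assumes "\<not> t dvd n" "xs \<in> colored P w t n"
  shows "\<exists>k. \<not> t dvd total_nparts t k xs"
proof (rule ccontr)
  assume "\<not> (\<exists>k. \<not> t dvd total_nparts t k xs)"
  then have dvd: "t dvd (\<Sum>k\<le>n. k * total_nparts t k xs)" by (simp add: dvd_sum)
  have P: "\<And>j. j < t \<Longrightarrow> P (xs ! j)" and W: "(\<Sum>j<t. w (xs ! j)) = n"
    using assms(2) by (auto simp: colored_iff_nth)
  have le: "w (xs ! j) \<le> n" if "j < t" for j
    using W member_le_sum[of j "{..<t}" "\<lambda>j. w (xs ! j)"] that by auto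
  have "n = (\<Sum>j<t. \<Sum>k\<le>n. k * nparts k (xs ! j))"
    using W[symmetric] by (simp add: weight_eq_sum_nparts[OF P le])
  also have "\<dots> = (\<Sum>k\<le>n. k * total_nparts t k xs)"
    unfolding total_nparts_def by (simp add: sum.swap[of _ "{..<t}"] sum_distrib_left)
  finally show False using dvd assms(1) by simp
qed

lemma pivot_inverse:
  assumes "prime t" "\<not> t dvd n" "xs \<in> colored P w t n"
  shows "0 < pivot_inverse t xs" "pivot_inverse t xs < t"
    "[pivot_inverse t xs * total_nparts t (pivot t xs) xs = 1] (mod t)"
proof -
  have "\<not> t dvd total_nparts t (pivot t xs) xs"
    unfolding pivot_def using ex_total_nparts_not_dvd[OF assms(2,3)] by (rule LeastI_ex)
  then have "\<exists>u. 0 < u \<and> u < t \<and> [u * total_nparts t (pivot t xs) xs = 1] (mod t)"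
    by (rule prime_inverse_mod_exists[OF assms(1)])
  then have "0 < pivot_inverse t xs \<and> pivot_inverse t xs < t
      \<and> [pivot_inverse t xs * total_nparts t (pivot t xs) xs = 1] (mod t)"
    unfolding pivot_inverse_def by (rule someI_ex)
  then show "0 < pivot_inverse t xs" "pivot_inverse t xs < t"
    "[pivot_inverse t xs * total_nparts t (pivot t xs) xs = 1] (mod t)" by auto
qed

lemma pivot_shift_parts: "0 < t \<Longrightarrow> pivot t (shift_parts t m s xs) = pivot t xs"
  by (simp add: pivot_def total_nparts_shift_parts)

lemma pivot_inverse_shift_parts: "0 < t \<Longrightarrow> pivot_inverse t (shift_parts t m s xs) = pivot_inverse t xs"
  by (simp add: pivot_inverse_def total_nparts_shift_parts pivot_shift_parts)

lemma advance_residue_class: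
  assumes "prime t" "\<not> t dvd n" "xs \<in> residue_class t n i"
  shows "advance t xs \<in> residue_class t n (Suc i mod t)"
proof -
  have t: "0 < t" using prime_gt_0_nat[OF assms(1)] .
  have xs: "xs \<in> colored P w t n" and i: "weighted_length L t xs mod int t = int i"
    using assms(3) by (auto simp: residue_class_def)
  define u where "u = pivot_inverse t xs"
  define m where "m = pivot t xs"
  have u: "u < t" "[int u * int (total_nparts t m xs) = 1] (mod int t)"
    using pivot_inverse[OF assms(1,2) xs] by (auto simp: u_def m_def simp flip: cong_int_iff)
  have "[weighted_length L t (advance t xs) = weighted_length L t xs + int u * int (total_nparts t m xs)] (mod int t)"
    using weighted_length_shift_parts_cong[OF t xs, of "t - u" m] u(1)
    by (simp add: advance_def u_def m_def)
  also have "[weighted_length L t xs + int u * int (total_nparts t m xs) = weighted_length L t xs + 1] (mod int t)"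
    by (intro cong_add cong_refl u(2))
  finally have "weighted_length L t (advance t xs) mod int t = (weighted_length L t xs + 1) mod int t"
    by (simp add: cong_def)
  also have "\<dots> = (int i + 1) mod int t" using i by (metis mod_add_left_eq)
  also have "\<dots> = int (Suc i mod t)" by (simp add: zmod_int add.commute)
  finally show ?thesis
    using shift_parts_colored[OF t xs] by (simp add: residue_class_def advance_def)
qed

lemma inj_on_advance:
  assumes "prime t" "\<not> t dvd n"
  shows "inj_on (advance t) (colored P w t n)"
proof (rule inj_on_inverseI)
  fix xs assume xs: "xs \<in> colored P w t n"
  have t: "0 < t" using prime_gt_0_nat[OF assms(1)] .
  have "length xs = t" using xs by (simp add: colored_iff_nth)
  moreover have "pivot_inverse t xs < t" using pivot_inverse[OF assms xs] by simp
  ultimately show "shift_parts t (pivot t (advance t xs)) (pivot_inverse t (advance t xs)) (advance t xs) = xs"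
    by (simp add: advance_def pivot_shift_parts pivot_inverse_shift_parts t shift_parts_shift_parts)
qed

lemma card_residue_class_eq:
  assumes "prime t" "\<not> t dvd n" "i < t"
  shows "card (residue_class t n i) = card (residue_class t n 0)"
proof (rule cyclic_mono_imp_eq[OF prime_gt_0_nat[OF assms(1)] _ assms(3)])
  fix j
  have "inj_on (advance t) (residue_class t n j)"
    using inj_on_advance[OF assms(1,2)] by (rule inj_on_subset) (auto simp: residue_class_def)
  moreover have "advance t ` residue_class t n j \<subseteq> residue_class t n (Suc j mod t)"
    using advance_residue_class[OF assms(1,2)] by blast
  moreover have "finite (residue_class t n (Suc j mod t))"
    using finite_colored by (simp add: residue_class_def)
  ultimately show "card (residue_class t n j) \<le> card (residue_class t n (Suc j mod t))"
    by (rule card_inj_on_le)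
qed

lemma card_colored_eq_sum_residue_class:
  assumes "0 < t"
  shows "card (colored P w t n) = (\<Sum>i<t. card (residue_class t n i))"
proof -
  define r where "r xs = nat (weighted_length L t xs mod int t)" for xs
  have "r ` colored P w t n \<subseteq> {..<t}"
    using assms by (auto simp: r_def nat_less_iff)
  then have "(\<Sum>i<t. card {xs. xs \<in> colored P w t n \<and> r xs = i}) = card (colored P w t n)"
    using sum.group[OF finite_colored finite_lessThan, where g = r and h = "\<lambda>_. 1 :: nat"] by simp
  moreover have "{xs. xs \<in> colored P w t n \<and> r xs = i} = residue_class t n i" if "i < t" for i
    using assms that by (auto simp: residue_class_def r_def)
  ultimately show ?thesis by simp
qed

theorem t_mult_Mgen_eq_card_colored:
  assumes "prime t" "odd t" "\<not> t dvd n" "i < t"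
  shows "t * Mgen P w L i t n = card (colored P w t n)"
proof -
  have t: "0 < t" using prime_gt_0_nat[OF assms(1)] .
  have "card (colored P w t n) = (\<Sum>j<t. card (residue_class t n j))"
    by (rule card_colored_eq_sum_residue_class[OF t])
  also have "\<dots> = (\<Sum>j<t. card (residue_class t n i))"
    by (rule sum.cong[OF refl]) (metis assms(1,3,4) card_residue_class_eq lessThan_iff)
  also have "card (residue_class t n i) = Mgen P w L i t n"
    unfolding Mgen_def residue_class_def
    using assms(4) by (simp add: rstar_mod_eq_weighted_length_mod[OF assms(2)])
  finally show ?thesis by simp
qed

end

section \<open>Partitions and pods\<close>

definition replace_mset :: "'a \<Rightarrow> 'a multiset \<Rightarrow> 'a multiset \<Rightarrow> 'a multiset" where
  "replace_mset m x y = filter_mset (\<lambda>z. z \<noteq> m) x + replicate_mset (count y m) m"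

lemma count_replace_mset: "count (replace_mset m x y) k = (if k = m then count y m else count x k)"
  by (auto simp: replace_mset_def)

lemma replace_mset_replace_mset: "replace_mset m (replace_mset m a b) (replace_mset m c d) = replace_mset m a d"
  by (rule multiset_eqI) (simp add: count_replace_mset)

lemma replace_mset_self: "replace_mset m a a = a"
  by (rule multiset_eqI) (simp add: count_replace_mset)

lemma mset_eq_filter_neq_plus_replicate: "x = filter_mset (\<lambda>z. z \<noteq> m) x + replicate_mset (count x m) m"
proof -
  have "filter_mset (\<lambda>z. \<not> z \<noteq> m) x = replicate_mset (count x m) m"
    using filter_eq_replicate_mset[of m x] by simp
  then show ?thesis using multiset_partition[of x "\<lambda>z. z \<noteq> m"] by metis
qed

lemma sum_mset_replace_mset:
  "sum_mset (replace_mset m x y) + m * count x m = sum_mset x + m * count (y :: nat multiset) m"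
proof -
  have "sum_mset x = sum_mset (filter_mset (\<lambda>z. z \<noteq> m) x) + count x m * m"
    by (subst mset_eq_filter_neq_plus_replicate[of x m]) simp
  then show ?thesis by (simp add: replace_mset_def)
qed

lemma size_replace_mset: "size (replace_mset m x y) + count x m = size x + count y m"
proof -
  have "size x = size (filter_mset (\<lambda>z. z \<noteq> m) x) + count x m"
    by (subst mset_eq_filter_neq_plus_replicate[of x m]) simp
  then show ?thesis by (simp add: replace_mset_def)
qed

lemma sum_mset_eq_sum_count:
  "sum_mset x \<le> B \<Longrightarrow> sum_mset x = (\<Sum>k\<le>B. k * count x k)"
proof (induction x)
  case (add a x)
  then have IH: "sum_mset x = (\<Sum>k\<le>B. k * count x k)" and "a \<le> B" by auto
  have "(\<Sum>k\<le>B. k * count (add_mset a x) k) = (\<Sum>k\<le>B. k * count x k + (if k = a then a else 0))"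
    by (rule sum.cong) auto
  also have "\<dots> = (\<Sum>k\<le>B. k * count x k) + a" using \<open>a \<le> B\<close> by (simp add: sum.distrib)
  finally show ?case using IH by simp
qed simp

lemma member_le_sum_mset: "(a :: nat) \<in># x \<Longrightarrow> a \<le> sum_mset x"
  by (metis insert_DiffM le_add1 sum_mset.add_mset)

lemma size_le_sum_mset: "0 \<notin># x \<Longrightarrow> size x \<le> sum_mset x"
proof (induction x)
  case (add a x)
  then show ?case by (cases a) auto
qed simp

lemma finite_partitions_sum_le: "finite {x. 0 \<notin># x \<and> sum_mset x \<le> (B :: nat)}"
proof (rule finite_subset)
  show "{x. 0 \<notin># x \<and> sum_mset x \<le> B} \<subseteq> mset ` {xs. set xs \<subseteq> {..B} \<and> length xs \<le> B}"
  proof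
    fix x assume x: "x \<in> {x. 0 \<notin># x \<and> sum_mset x \<le> B}"
    obtain xs where xs: "mset xs = x" using ex_mset by blast
    have "length xs \<le> B" using size_le_sum_mset[of x] x xs by auto
    moreover have "set xs \<subseteq> {..B}"
    proof
      fix a assume "a \<in> set xs"
      then have "a \<le> sum_mset x" using xs member_le_sum_mset by auto
      then show "a \<in> {..B}" using x by simp
    qed
    ultimately show "x \<in> mset ` {xs. set xs \<subseteq> {..B} \<and> length xs \<le> B}" using xs by blast
  qed
  show "finite (mset ` {xs. set xs \<subseteq> {..B} \<and> length xs \<le> B})"
    by (intro finite_imageI finite_lists_length_le) simp
qed

interpretation partitions: partition_kind is_partition sum_mset size "\<lambda>k x. count x k" replace_mset
proof
  fix x y m assume "is_partition x" "is_partition y"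
  then show "is_partition (replace_mset m x y)"
    by (simp add: is_partition_def count_replace_mset flip: count_eq_zero_iff)
qed (auto simp: count_replace_mset replace_mset_replace_mset replace_mset_self is_partition_def
  sum_mset_replace_mset size_replace_mset intro: sum_mset_eq_sum_count finite_partitions_sum_le)

interpretation pods: partition_kind is_pod sum_mset size "\<lambda>k x. count x k" replace_mset
proof
  fix x y m assume "is_pod x" "is_pod y"
  then show "is_pod (replace_mset m x y)"
    by (simp add: is_pod_def count_replace_mset flip: count_eq_zero_iff)
next
  fix B :: nat
  have "{x. is_pod x \<and> sum_mset x \<le> B} \<subseteq> {x. 0 \<notin># x \<and> sum_mset x \<le> B}"
    by (auto simp: is_pod_def)
  then show "finite {x. is_pod x \<and> sum_mset x \<le> B}"
    using finite_partitions_sum_le by (rule finite_subset)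
qed (auto simp: count_replace_mset replace_mset_replace_mset replace_mset_self
  sum_mset_replace_mset size_replace_mset intro: sum_mset_eq_sum_count)


section \<open>Overpartitions\<close>

definition replace_overparts :: "nat \<Rightarrow> overpartition \<Rightarrow> overpartition \<Rightarrow> overpartition" where
  "replace_overparts m x y = (replace_mset m (fst x) (fst y), (snd x - {m}) \<union> (snd y \<inter> {m}))"

definition overpart_count :: "nat \<Rightarrow> overpartition \<Rightarrow> nat" where
  "overpart_count k x = count (fst x) k + of_bool (k \<in> snd x)"

lemma
  fixes S S' :: "nat set"
  assumes "finite S" "finite S'"
  shows sum_replace_set: "\<Sum>((S - {m}) \<union> (S' \<inter> {m})) + m * of_bool (m \<in> S) = \<Sum>S + m * of_bool (m \<in> S')"
    and card_replace_set: "card ((S - {m}) \<union> (S' \<inter> {m})) + of_bool (m \<in> S) = card S + of_bool (m \<in> S')"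
proof -
  have disj: "(S - {m}) \<inter> (S' \<inter> {m}) = {}" and fin: "finite (S - {m})" "finite (S' \<inter> {m})"
    using assms by auto
  have sum_S: "\<Sum>S = \<Sum>(S - {m}) + m * of_bool (m \<in> S)"
    using sum.remove[OF assms(1), of m "\<lambda>x. x"] by (cases "m \<in> S") simp_all
  have card_S: "card S = card (S - {m}) + of_bool (m \<in> S)"
    using card.remove[OF assms(1), of m] by (cases "m \<in> S") simp_all
  have "\<Sum>(S' \<inter> {m}) = m * of_bool (m \<in> S')" "card (S' \<inter> {m}) = of_bool (m \<in> S')"
    by (auto simp: Int_insert_right)
  then show "\<Sum>((S - {m}) \<union> (S' \<inter> {m})) + m * of_bool (m \<in> S) = \<Sum>S + m * of_bool (m \<in> S')"
    and "card ((S - {m}) \<union> (S' \<inter> {m})) + of_bool (m \<in> S) = card S + of_bool (m \<in> S')"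
    using sum_S card_S by (simp_all add: sum.union_disjoint[OF fin disj] card_Un_disjoint[OF fin disj])
qed

lemma sum_eq_sum_indicator:
  assumes "finite S" "\<Sum>S \<le> (B::nat)"
  shows "\<Sum>S = (\<Sum>k\<le>B. k * of_bool (k \<in> S))"
proof -
  have "S \<subseteq> {..B}" using assms member_le_sum[of _ S "\<lambda>x. x"] by fastforce
  then have "\<Sum>S = \<Sum>({..B} \<inter> S)" by (simp add: Int_absorb1)
  also have "\<dots> = (\<Sum>k\<le>B. k * of_bool (k \<in> S))" by (simp add: sum.inter_restrict)
  finally show ?thesis .
qed
lemma is_overpartition_replace_overparts:
  "is_overpartition x \<Longrightarrow> is_overpartition y \<Longrightarrow> is_overpartition (replace_overparts m x y)"
  by (auto simp: is_overpartition_def replace_overparts_def count_replace_mset simp flip: count_eq_zero_iff)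

lemma
  assumes "is_overpartition x" "is_overpartition y"
  shows op_weight_replace_overparts:
      "op_weight (replace_overparts m x y) + m * overpart_count m x = op_weight x + m * overpart_count m y"
    and op_len_replace_overparts:
      "op_len (replace_overparts m x y) + overpart_count m x = op_len x + overpart_count m y"
proof -
  have fin: "finite (snd x)" "finite (snd y)" using assms by (auto simp: is_overpartition_def)
  show "op_weight (replace_overparts m x y) + m * overpart_count m x = op_weight x + m * overpart_count m y"
    using sum_mset_replace_mset[of m "fst x" "fst y"] sum_replace_set[OF fin, of m]
    by (simp add: op_weight_def replace_overparts_def overpart_count_def algebra_simps)
  show "op_len (replace_overparts m x y) + overpart_count m x = op_len x + overpart_count m y"
    using size_replace_mset[of m "fst x" "fst y"] card_replace_set[OF fin, of m]
    by (simp add: op_len_def replace_overparts_def overpart_count_def algebra_simps)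
qed

lemma overpart_count_replace_overparts:
  "overpart_count k (replace_overparts m x y) = (if k = m then overpart_count m y else overpart_count k x)"
  by (auto simp: overpart_count_def replace_overparts_def count_replace_mset)

lemma replace_overparts_replace_overparts:
  "replace_overparts m (replace_overparts m a b) (replace_overparts m c d) = replace_overparts m a d"
  by (auto simp: replace_overparts_def replace_mset_replace_mset)

lemma replace_overparts_self: "replace_overparts m a a = a"
  by (cases a) (auto simp: replace_overparts_def replace_mset_self)

lemma op_weight_eq_sum_overpart_count:
  assumes "is_overpartition x" "op_weight x \<le> B"
  shows "op_weight x = (\<Sum>k\<le>B. k * overpart_count k x)"
proof -
  have fin: "finite (snd x)" and le: "sum_mset (fst x) \<le> B" "\<Sum>(snd x) \<le> B"
    using assms by (auto simp: is_overpartition_def op_weight_def)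
  show ?thesis
    using sum_mset_eq_sum_count[OF le(1)] sum_eq_sum_indicator[OF fin le(2)]
    by (simp add: op_weight_def overpart_count_def algebra_simps sum.distrib)
qed

lemma finite_overpartitions_weight_le: "finite {x. is_overpartition x \<and> op_weight x \<le> B}"
proof (rule finite_subset)
  show "{x. is_overpartition x \<and> op_weight x \<le> B} \<subseteq> {x. 0 \<notin># x \<and> sum_mset x \<le> B} \<times> Pow {..B}"
  proof clarify
    fix M S assume "is_overpartition (M, S)" "op_weight (M, S) \<le> B"
    then have "finite S" "sum_mset M \<le> B" "\<Sum>S \<le> B" "0 \<notin># M"
      by (auto simp: is_overpartition_def op_weight_def)
    then show "M \<in> {x. 0 \<notin># x \<and> sum_mset x \<le> B} \<and> S \<in> Pow {..B}"
      using member_le_sum[of _ S "\<lambda>x. x"] by fastforce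
  qed
  show "finite ({x. 0 \<notin># x \<and> sum_mset x \<le> B} \<times> Pow {..B})"
    using finite_partitions_sum_le by blast
qed

interpretation overpartitions: partition_kind is_overpartition op_weight op_len overpart_count replace_overparts
  by unfold_locales (fact is_overpartition_replace_overparts op_weight_replace_overparts op_len_replace_overparts
    overpart_count_replace_overparts replace_overparts_replace_overparts replace_overparts_self
    op_weight_eq_sum_overpart_count finite_overpartitions_weight_le)+


definition least_part :: "overpartition \<Rightarrow> nat" where
  "least_part p = Min (set_mset (fst p) \<union> snd p)"

definition toggle :: "nat \<Rightarrow> overpartition \<Rightarrow> overpartition" where
  "toggle m p = (if m \<in> snd p then (add_mset m (fst p), snd p - {m})
                 else (fst p - {#m#}, insert m (snd p)))"

lemma
  assumes "m \<in> set_mset (fst p) \<union> snd p" "finite (snd p)"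
  shows parts_toggle: "set_mset (fst (toggle m p)) \<union> snd (toggle m p) = set_mset (fst p) \<union> snd p"
    and toggle_toggle: "toggle m (toggle m p) = p"
    and toggle_neq: "toggle m p \<noteq> p"
    and op_weight_toggle: "op_weight (toggle m p) = op_weight p"
    and op_len_toggle: "op_len (toggle m p) = op_len p"
proof -
  obtain M S where p: "p = (M, S)" by (cases p)
  have fin: "finite S" using assms(2) by (simp add: p)
  show "set_mset (fst (toggle m p)) \<union> snd (toggle m p) = set_mset (fst p) \<union> snd p"
    using assms(1) by (auto simp: toggle_def p in_diff_count split: if_splits)
  show "toggle m (toggle m p) = p" "toggle m p \<noteq> p"
    using assms(1) by (auto simp: toggle_def p)
  show "op_weight (toggle m p) = op_weight p"
  proof (cases "m \<in> S")
    case True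
    then show ?thesis using sum.remove[OF fin True, of "\<lambda>x. x"] by (simp add: toggle_def p op_weight_def)
  next
    case False
    then have "m \<in># M" using assms(1) by (simp add: p)
    then have "sum_mset M = m + sum_mset (M - {#m#})" by (metis insert_DiffM sum_mset.add_mset)
    then show ?thesis using False fin by (simp add: toggle_def p op_weight_def)
  qed
  show "op_len (toggle m p) = op_len p"
  proof (cases "m \<in> S")
    case True
    then show ?thesis using card.remove[OF fin True] by (simp add: toggle_def p op_len_def)
  next
    case False
    then have "m \<in># M" using assms(1) by (simp add: p)
    then have "size M = Suc (size (M - {#m#}))" by (metis insert_DiffM size_add_mset)
    then show ?thesis using False fin by (simp add: toggle_def p op_len_def)
  qed
qed

lemma is_overpartition_toggle:
  assumes "is_overpartition p" "m \<in> set_mset (fst p) \<union> snd p"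
  shows "is_overpartition (toggle m p)"
proof -
  have "m \<noteq> 0" using assms unfolding is_overpartition_def by (metis UnE)
  then show ?thesis using assms by (auto simp: is_overpartition_def toggle_def dest: in_diffD)
qed

lemma least_part_mem:
  assumes "is_overpartition p" "op_weight p \<noteq> 0"
  shows "least_part p \<in> set_mset (fst p) \<union> snd p"
  unfolding least_part_def using assms by (intro Min_in) (auto simp: is_overpartition_def op_weight_def)

lemma toggle_least_part:
  assumes "is_overpartition p" "op_weight p \<noteq> 0"
  defines "q \<equiv> toggle (least_part p) p"
  shows "is_overpartition q" "op_weight q = op_weight p" "op_len q = op_len p"
    "op_weight q \<noteq> 0" "toggle (least_part q) q = p" "q \<noteq> p"
proof -
  have m: "least_part p \<in> set_mset (fst p) \<union> snd p" by (rule least_part_mem[OF assms(1,2)])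
  have fin: "finite (snd p)" using assms(1) by (simp add: is_overpartition_def)
  show "is_overpartition q" unfolding q_def by (rule is_overpartition_toggle[OF assms(1) m])
  show "op_weight q = op_weight p" "op_len q = op_len p" "q \<noteq> p"
    unfolding q_def by (intro op_weight_toggle op_len_toggle toggle_neq m fin)+
  then show "op_weight q \<noteq> 0" using assms(2) by simp
  have "least_part q = Min (set_mset (fst q) \<union> snd q)" by (simp only: least_part_def)
  also have "set_mset (fst q) \<union> snd q = set_mset (fst p) \<union> snd p"
    unfolding q_def by (rule parts_toggle[OF m fin])
  finally have "least_part q = least_part p" by (simp only: least_part_def)
  then show "toggle (least_part q) q = p" unfolding q_def by (simp add: toggle_toggle[OF m fin])
qed

fun toggle_first :: "overpartition list \<Rightarrow> overpartition list" where
  "toggle_first [] = []"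
| "toggle_first (p # ps) =
    (if op_weight p = 0 then p # toggle_first ps else toggle (least_part p) p # ps)"

context
  fixes xs :: "overpartition list"
  assumes overpartitions: "\<forall>p\<in>set xs. is_overpartition p"
begin

lemma map_op_weight_toggle_first: "map op_weight (toggle_first xs) = map op_weight xs"
  using overpartitions by (induction xs) (simp_all add: toggle_least_part)

lemma map_op_len_toggle_first: "map op_len (toggle_first xs) = map op_len xs"
  using overpartitions by (induction xs) (simp_all add: toggle_least_part)

lemma toggle_first_overpartitions: "\<forall>p\<in>set (toggle_first xs). is_overpartition p"
  using overpartitions by (induction xs) (simp_all add: toggle_least_part)

lemma toggle_first_toggle_first: "toggle_first (toggle_first xs) = xs"
  using overpartitions by (induction xs) (simp_all add: toggle_least_part)

lemma toggle_first_neq: "sum_list (map op_weight xs) \<noteq> 0 \<Longrightarrow> toggle_first xs \<noteq> xs"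
  using overpartitions by (induction xs) (auto simp: toggle_least_part)

end

lemma even_Mbar_col:
  assumes "0 < n"
  shows "even (Mbar_col i t n)"
proof -
  define A where "A = {xs \<in> colored is_overpartition op_weight t n. rstar op_len t xs mod int t = int i mod int t}"
  have "toggle_first xs \<in> A" "toggle_first (toggle_first xs) = xs" "toggle_first xs \<noteq> xs"
    if "xs \<in> A" for xs
  proof -
    have ops: "\<forall>p\<in>set xs. is_overpartition p" and len: "length xs = t"
      and weight: "sum_list (map op_weight xs) = n" and r: "rstar op_len t xs mod int t = int i mod int t"
      using that by (auto simp: A_def colored_def)
    have "length (toggle_first xs) = t" using map_op_weight_toggle_first[OF ops] len by (metis length_map)
    moreover have "rstar op_len t (toggle_first xs) = rstar op_len t xs"
      using map_op_len_toggle_first[OF ops] len by (rule rstar_eq_if_map_length_eq)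
    ultimately show "toggle_first xs \<in> A"
      using toggle_first_overpartitions[OF ops] map_op_weight_toggle_first[OF ops] weight r
      by (simp add: A_def colored_def)
    show "toggle_first (toggle_first xs) = xs" by (rule toggle_first_toggle_first[OF ops])
    show "toggle_first xs \<noteq> xs" using toggle_first_neq[OF ops] weight assms by simp
  qed
  then have "even (card A)" by (intro even_card_involution[of A toggle_first]) auto
  then show ?thesis by (simp add: Mbar_col_def Mgen_def A_def)
qed

theorem theorem2p5:
  fixes t n :: nat
  assumes "prime t" and "odd t" and "\<not> t dvd n"
  shows "(\<forall>i\<le>t-1.
            t * M_col i t n = p_col t n \<and>
            t * Mbar_col i t n = pbar_col t n \<and> even (Mbar_col i t n) \<and>
            t * Mhat_col i t n = phat_col t n)
         \<and> t dvd p_col t n \<and> t dvd phat_col t n \<and> 2 * t dvd pbar_col t n"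
proof -
  have "0 < n" using assms(3) by (rule contrapos_np) simp
  have classes: "t * M_col i t n = p_col t n" "t * Mbar_col i t n = pbar_col t n"
    "even (Mbar_col i t n)" "t * Mhat_col i t n = phat_col t n" if "i \<le> t - 1" for i
  proof -
    have "i < t" using that prime_gt_0_nat[OF assms(1)] by simp
    then show "t * M_col i t n = p_col t n" "t * Mbar_col i t n = pbar_col t n"
      "t * Mhat_col i t n = phat_col t n"
      unfolding M_col_def Mbar_col_def Mhat_col_def p_col_def pbar_col_def phat_col_def
      by (fact partitions.t_mult_Mgen_eq_card_colored[OF assms] overpartitions.t_mult_Mgen_eq_card_colored[OF assms]
          pods.t_mult_Mgen_eq_card_colored[OF assms])+
    show "even (Mbar_col i t n)" using even_Mbar_col[OF \<open>0 < n\<close>] .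
  qed
  obtain k where "Mbar_col 0 t n = 2 * k" using classes(3)[of 0] by blast
  then have "pbar_col t n = 2 * t * k" using classes(2)[of 0] by simp
  then show ?thesis using classes[of 0] classes by (metis dvd_triv_left dvd_triv_right le0)
qed

end
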